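(* If $G$ is a fullerene, then $\mathrm{GP}(G)$ is an integer.
   Context: All graphs are simple and finite. For a connected graph $G$, $d_G(u,v)$ denotes the shortest-path distance and $\mathrm{Aut}(G)$ the automorphism group. The Graovac-Pisanski index is $$\mathrm{GP}(G)=\frac{|V(G)|}{2|\mathrm{Aut}(G)|}\sum_{u\in V(G)}\sum_{\alpha\in \mathrm{Aut}(G)} d_G(u,\alpha(u)).$$ A fullerene is a 3-connected 3-regular plane graph in which every face is bounded by a pentagon or a hexagon. *)

theory Defs
  imports Complex_Main
begin

definition simple_graph :: "'a set \<Rightarrow> ('a \<Rightarrow> 'a \<Rightarrow> bool) \<Rightarrow> bool" where
  "simple_graph V E \<longleftrightarrow> finite V \<and> (\<forall>u v. E u v \<longrightarrow> u \<in> V \<and> v \<in> V \<and> u \<noteq> v \<and> E v u)"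

fun is_walk :: "('a \<Rightarrow> 'a \<Rightarrow> bool) \<Rightarrow> 'a list \<Rightarrow> bool" where
  "is_walk E [] = False"
| "is_walk E [x] = True"
| "is_walk E (x # y # xs) = (E x y \<and> is_walk E (y # xs))"

definition walk_between :: "'a set \<Rightarrow> ('a \<Rightarrow> 'a \<Rightarrow> bool) \<Rightarrow> 'a \<Rightarrow> 'a \<Rightarrow> 'a list \<Rightarrow> bool" where
  "walk_between V E u v xs \<longleftrightarrow> is_walk E xs \<and> set xs \<subseteq> V \<and> hd xs = u \<and> last xs = v"

definition connected_graph :: "'a set \<Rightarrow> ('a \<Rightarrow> 'a \<Rightarrow> bool) \<Rightarrow> bool" where
  "connected_graph V E \<longleftrightarrow> V \<noteq> {} \<and> (\<forall>u\<in>V. \<forall>v\<in>V. \<exists>xs. walk_between V E u v xs)"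

text \<open>Shortest-path distance (number of edges of a shortest walk).\<close>
definition dist :: "'a set \<Rightarrow> ('a \<Rightarrow> 'a \<Rightarrow> bool) \<Rightarrow> 'a \<Rightarrow> 'a \<Rightarrow> nat" where
  "dist V E u v = (LEAST n. \<exists>xs. walk_between V E u v xs \<and> length xs = Suc n)"

definition delete_vertices :: "'a set \<Rightarrow> ('a \<Rightarrow> 'a \<Rightarrow> bool) \<Rightarrow> 'a set \<Rightarrow> ('a \<Rightarrow> 'a \<Rightarrow> bool)" where
  "delete_vertices V E S = (\<lambda>u v. E u v \<and> u \<notin> S \<and> v \<notin> S)"

definition three_connected :: "'a set \<Rightarrow> ('a \<Rightarrow> 'a \<Rightarrow> bool) \<Rightarrow> bool" where
  "three_connected V E \<longleftrightarrow> card V \<ge> 4 \<and>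
     (\<forall>S. S \<subseteq> V \<and> card S \<le> 2 \<longrightarrow> connected_graph (V - S) (delete_vertices V E S))"

definition neighbours :: "('a \<Rightarrow> 'a \<Rightarrow> bool) \<Rightarrow> 'a \<Rightarrow> 'a set" where
  "neighbours E u = {v. E u v}"

definition cubic :: "'a set \<Rightarrow> ('a \<Rightarrow> 'a \<Rightarrow> bool) \<Rightarrow> bool" where
  "cubic V E \<longleftrightarrow> (\<forall>u\<in>V. card (neighbours E u) = 3)"

definition edge_set :: "('a \<Rightarrow> 'a \<Rightarrow> bool) \<Rightarrow> 'a set set" where
  "edge_set E = {{u, v} | u v. E u v}"

definition darts :: "('a \<Rightarrow> 'a \<Rightarrow> bool) \<Rightarrow> ('a \<times> 'a) set" where
  "darts E = {(u, v). E u v}"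

text \<open>Combinatorial embedding (rotation system): sigma permutes the darts, keeps the tail
 vertex and acts cyclically (a single cycle) on the darts leaving each vertex.\<close>
definition rotation_system :: "('a \<Rightarrow> 'a \<Rightarrow> bool) \<Rightarrow> ('a \<times> 'a \<Rightarrow> 'a \<times> 'a) \<Rightarrow> bool" where
  "rotation_system E \<sigma> \<longleftrightarrow> bij_betw \<sigma> (darts E) (darts E) \<and>
     (\<forall>d\<in>darts E. fst (\<sigma> d) = fst d) \<and>
     (\<forall>u v w. E u v \<and> E u w \<longrightarrow> (\<exists>n. (\<sigma> ^^ n) (u, v) = (u, w)))"

text \<open>Face permutation: traverse dart (u,v), then turn at v.\<close>
definition face_perm :: "('a \<times> 'a \<Rightarrow> 'a \<times> 'a) \<Rightarrow> 'a \<times> 'a \<Rightarrow> 'a \<times> 'a" where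
  "face_perm \<sigma> d = \<sigma> (snd d, fst d)"

definition orbit :: "('b \<Rightarrow> 'b) \<Rightarrow> 'b \<Rightarrow> 'b set" where
  "orbit f x = {(f ^^ n) x | n. True}"

definition faces :: "('a \<Rightarrow> 'a \<Rightarrow> bool) \<Rightarrow> ('a \<times> 'a \<Rightarrow> 'a \<times> 'a) \<Rightarrow> ('a \<times> 'a) set set" where
  "faces E \<sigma> = orbit (face_perm \<sigma>) ` darts E"

text \<open>A rotation system of a connected graph is a plane (spherical) embedding iff
 Euler's formula V - E + F = 2 holds (genus 0).\<close>
definition plane_embedding :: "'a set \<Rightarrow> ('a \<Rightarrow> 'a \<Rightarrow> bool) \<Rightarrow> ('a \<times> 'a \<Rightarrow> 'a \<times> 'a) \<Rightarrow> bool" where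
  "plane_embedding V E \<sigma> \<longleftrightarrow> rotation_system E \<sigma> \<and>
     int (card V) - int (card (edge_set E)) + int (card (faces E \<sigma>)) = 2"

text \<open>A face is bounded by a k-cycle: its boundary walk has length k and visits k distinct vertices.\<close>
definition face_is_cycle_of_length :: "('a \<times> 'a) set \<Rightarrow> nat \<Rightarrow> bool" where
  "face_is_cycle_of_length F k \<longleftrightarrow> card F = k \<and> inj_on fst F"

definition fullerene :: "'a set \<Rightarrow> ('a \<Rightarrow> 'a \<Rightarrow> bool) \<Rightarrow> bool" where
  "fullerene V E \<longleftrightarrow> simple_graph V E \<and> three_connected V E \<and> cubic V E \<and>
     (\<exists>\<sigma>. plane_embedding V E \<sigma> \<and>
        (\<forall>F\<in>faces E \<sigma>. face_is_cycle_of_length F 5 \<or> face_is_cycle_of_length F 6))"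

definition Aut :: "'a set \<Rightarrow> ('a \<Rightarrow> 'a \<Rightarrow> bool) \<Rightarrow> ('a \<Rightarrow> 'a) set" where
  "Aut V E = {\<alpha>. bij_betw \<alpha> V V \<and> (\<forall>x. x \<notin> V \<longrightarrow> \<alpha> x = x) \<and>
                 (\<forall>u\<in>V. \<forall>v\<in>V. E (\<alpha> u) (\<alpha> v) \<longleftrightarrow> E u v)}"

definition GP :: "'a set \<Rightarrow> ('a \<Rightarrow> 'a \<Rightarrow> bool) \<Rightarrow> real" where
  "GP V E = real (card V) / (2 * real (card (Aut V E))) *
            (\<Sum>u\<in>V. \<Sum>\<alpha>\<in>Aut V E. real (dist V E u (\<alpha> u)))"

end

theory Submission
  imports Defs "HOL-Library.FuncSet"
begin

text \<open>Automorphisms preserve distances, so \<open>h u = (\<Sum>\<alpha>\<in>Aut. d u (\<alpha> u))\<close> is constant on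
each orbit \<open>O\<close> of the automorphism group, and grouping the automorphisms by the image of \<open>u\<close>
gives \<open>h u = |Stab u| * (\<Sum>v\<in>O. d u v)\<close>. Hence \<open>O\<close> contributes
\<open>|O| * |Stab u| * (\<Sum>v\<in>O. d u v) = |Aut| * (\<Sum>v\<in>O. d u v)\<close> to the double sum, which is
therefore divisible by \<open>|Aut|\<close>. The remaining factor \<open>|V| / 2\<close> is an integer because a cubic
graph has an even number of vertices (handshake lemma).\<close>

lemma even_card_if_fixpoint_free_involution:
  assumes "finite D" and "\<And>x. x \<in> D \<Longrightarrow> f x \<in> D \<and> f (f x) = x \<and> f x \<noteq> x"
  shows "even (card D)"
  using assms
proof (induction "card D" arbitrary: D rule: less_induct)
  case less
  show ?case
  proof (cases "D = {}")
    case False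
    then obtain d where d: "d \<in> D" by blast
    let ?D = "D - {d, f d}"
    have fd: "f d \<in> D" "f d \<noteq> d" "f (f d) = d" using less.prems(2) d by auto
    have "{d, f d} \<subseteq> D" "card {d, f d} = 2" using fd d by auto
    then have card_D: "card ?D + 2 = card D"
      using less.prems(1) card_mono[of D "{d, f d}"] by (simp add: card_Diff_subset)
    have "f x \<in> ?D \<and> f (f x) = x \<and> f x \<noteq> x" if x: "x \<in> ?D" for x
    proof -
      have "f x \<in> D" "f (f x) = x" "f x \<noteq> x" using less.prems(2) x by auto
      moreover have "f x \<noteq> d" "f x \<noteq> f d" using calculation(2) x fd(3) by auto
      ultimately show ?thesis by blast
    qed
    then have "even (card ?D)" using less.hyps[of ?D] card_D less.prems(1) by simp
    then show ?thesis using card_D by (metis even_add even_numeral)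
  qed simp
qed

lemma card_darts:
  assumes "simple_graph V E"
  shows "card (darts E) = (\<Sum>u\<in>V. card (neighbours E u))"
proof -
  have "darts E = Sigma V (neighbours E)"
    using assms unfolding darts_def neighbours_def simple_graph_def by auto
  moreover have "finite V" "\<And>u. finite (neighbours E u)"
    using assms unfolding simple_graph_def neighbours_def by (auto intro: finite_subset)
  ultimately show ?thesis by simp
qed

lemma even_card_darts:
  assumes "simple_graph V E"
  shows "even (card (darts E))"
proof (rule even_card_if_fixpoint_free_involution)
  have "darts E \<subseteq> V \<times> V" "finite V"
    using assms unfolding darts_def simple_graph_def by auto
  then show "finite (darts E)" by (auto intro: finite_subset)
  show "\<And>d. d \<in> darts E \<Longrightarrow> prod.swap d \<in> darts E \<and> prod.swap (prod.swap d) = d \<and> prod.swap d \<noteq> d"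
    using assms unfolding darts_def simple_graph_def by auto
qed

lemma even_card_cubic:
  assumes "simple_graph V E" and "cubic V E"
  shows "even (card V)"
proof -
  have "card (darts E) = 3 * card V"
    using card_darts[OF assms(1)] assms(2) by (simp add: cubic_def)
  then show ?thesis using even_card_darts[OF assms(1)] by simp
qed

locale transformation_group =
  fixes V :: "'a set" and G :: "('a \<Rightarrow> 'a) set"
  assumes finite_G: "finite G"
    and id_mem: "id \<in> G"
    and comp_mem: "\<alpha> \<in> G \<Longrightarrow> \<beta> \<in> G \<Longrightarrow> \<alpha> \<circ> \<beta> \<in> G"
    and inverse_exists: "\<alpha> \<in> G \<Longrightarrow> \<exists>\<beta>\<in>G. \<beta> \<circ> \<alpha> = id \<and> \<alpha> \<circ> \<beta> = id"
    and maps_into: "\<alpha> \<in> G \<Longrightarrow> x \<in> V \<Longrightarrow> \<alpha> x \<in> V"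
begin

definition orbit_of :: "'a \<Rightarrow> 'a set" where
  "orbit_of u = (\<lambda>\<alpha>. \<alpha> u) ` G"

definition stabilizer :: "'a \<Rightarrow> ('a \<Rightarrow> 'a) set" where
  "stabilizer u = {\<alpha>\<in>G. \<alpha> u = u}"

lemma mem_orbit_of_self: "u \<in> orbit_of u"
  unfolding orbit_of_def by (rule image_eqI[OF _ id_mem]) simp

lemma orbit_of_subset: "u \<in> V \<Longrightarrow> orbit_of u \<subseteq> V"
  unfolding orbit_of_def using maps_into by auto

lemma orbit_of_eq:
  assumes "v \<in> orbit_of u"
  shows "orbit_of v = orbit_of u"
proof -
  obtain \<gamma> where \<gamma>: "\<gamma> \<in> G" "v = \<gamma> u" using assms unfolding orbit_of_def by auto
  obtain \<beta> where \<beta>: "\<beta> \<in> G" "\<beta> \<circ> \<gamma> = id" using inverse_exists[OF \<gamma>(1)] by blast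
  have "\<beta> (\<gamma> u) = u" using \<beta>(2) by (simp add: pointfree_idE)
  have "orbit_of v \<subseteq> orbit_of u"
  proof
    fix w assume "w \<in> orbit_of v"
    then obtain \<alpha> where "\<alpha> \<in> G" "w = (\<alpha> \<circ> \<gamma>) u" unfolding orbit_of_def \<gamma>(2) by auto
    then show "w \<in> orbit_of u" unfolding orbit_of_def using comp_mem \<gamma>(1) by blast
  qed
  moreover have "orbit_of u \<subseteq> orbit_of v"
  proof
    fix w assume "w \<in> orbit_of u"
    then obtain \<alpha> where "\<alpha> \<in> G" "w = (\<alpha> \<circ> \<beta>) v"
      unfolding orbit_of_def \<gamma>(2) using \<open>\<beta> (\<gamma> u) = u\<close> by auto
    then show "w \<in> orbit_of v" unfolding orbit_of_def using comp_mem \<beta>(1) by blast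
  qed
  ultimately show ?thesis by blast
qed

lemma card_fibre_eq_card_stabilizer:
  assumes "\<gamma> \<in> G"
  shows "card {\<alpha>\<in>G. \<alpha> u = \<gamma> u} = card (stabilizer u)"
proof -
  obtain \<beta> where \<beta>: "\<beta> \<in> G" "\<beta> \<circ> \<gamma> = id" "\<gamma> \<circ> \<beta> = id"
    using inverse_exists[OF assms] by blast
  have "bij_betw ((\<circ>) \<beta>) {\<alpha>\<in>G. \<alpha> u = \<gamma> u} (stabilizer u)"
  proof (rule bij_betw_byWitness[where f'="(\<circ>) \<gamma>"])
    show "\<forall>\<alpha>\<in>{\<alpha>\<in>G. \<alpha> u = \<gamma> u}. \<gamma> \<circ> (\<beta> \<circ> \<alpha>) = \<alpha>"
      "\<forall>\<alpha>\<in>stabilizer u. \<beta> \<circ> (\<gamma> \<circ> \<alpha>) = \<alpha>"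
      using \<beta> by (simp_all add: comp_assoc[symmetric])
    show "(\<circ>) \<beta> ` {\<alpha>\<in>G. \<alpha> u = \<gamma> u} \<subseteq> stabilizer u"
      using \<beta> comp_mem by (auto simp: stabilizer_def pointfree_idE)
    show "(\<circ>) \<gamma> ` stabilizer u \<subseteq> {\<alpha>\<in>G. \<alpha> u = \<gamma> u}"
      using assms comp_mem by (auto simp: stabilizer_def)
  qed
  then show ?thesis by (rule bij_betw_same_card)
qed

lemma sum_group_eq_sum_orbit:
  fixes g :: "'a \<Rightarrow> 'b::comm_semiring_1"
  shows "(\<Sum>\<alpha>\<in>G. g (\<alpha> u)) = of_nat (card (stabilizer u)) * (\<Sum>v\<in>orbit_of u. g v)"
proof -
  have "(\<Sum>\<alpha>\<in>G. g (\<alpha> u)) = (\<Sum>v\<in>orbit_of u. \<Sum>\<alpha>\<in>{\<alpha>\<in>G. \<alpha> u = v}. g (\<alpha> u))"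
    unfolding orbit_of_def by (rule sum.image_gen[OF finite_G])
  also have "\<dots> = (\<Sum>v\<in>orbit_of u. of_nat (card (stabilizer u)) * g v)"
  proof (rule sum.cong)
    fix v assume "v \<in> orbit_of u"
    then obtain \<gamma> where "\<gamma> \<in> G" "v = \<gamma> u" unfolding orbit_of_def by auto
    then show "(\<Sum>\<alpha>\<in>{\<alpha>\<in>G. \<alpha> u = v}. g (\<alpha> u)) = of_nat (card (stabilizer u)) * g v"
      using card_fibre_eq_card_stabilizer[of \<gamma> u] by simp
  qed simp
  finally show ?thesis by (simp add: sum_distrib_left)
qed

lemma card_group_eq: "card G = card (orbit_of u) * card (stabilizer u)"
  using sum_group_eq_sum_orbit[of "\<lambda>_. 1::nat" u] by simp

lemma card_dvd_sum_of_orbit_invariant: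
  assumes "finite V"
    and dvd: "\<And>u. u \<in> V \<Longrightarrow> card G dvd card (orbit_of u) * h u"
    and invariant: "\<And>u v. v \<in> orbit_of u \<Longrightarrow> h v = h u"
  shows "card G dvd (\<Sum>u\<in>V. h u)"
proof -
  have "(\<Sum>u\<in>V. h u) = (\<Sum>P\<in>orbit_of ` V. \<Sum>u\<in>{u\<in>V. orbit_of u = P}. h u)"
    by (rule sum.image_gen[OF assms(1)])
  also have "\<dots> = (\<Sum>P\<in>orbit_of ` V. \<Sum>u\<in>P. h u)"
  proof (rule sum.cong)
    fix P assume "P \<in> orbit_of ` V"
    then obtain w where "w \<in> V" "P = orbit_of w" by blast
    then have "{u\<in>V. orbit_of u = P} = P"
      using orbit_of_eq orbit_of_subset mem_orbit_of_self by blast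
    then show "(\<Sum>u\<in>{u\<in>V. orbit_of u = P}. h u) = (\<Sum>u\<in>P. h u)" by simp
  qed simp
  finally have "(\<Sum>u\<in>V. h u) = (\<Sum>P\<in>orbit_of ` V. \<Sum>u\<in>P. h u)" .
  moreover have "card G dvd (\<Sum>u\<in>orbit_of w. h u)" if "w \<in> V" for w
    using dvd[OF that] invariant[of _ w] by simp
  ultimately show ?thesis by (auto intro: dvd_sum)
qed

lemma sum_displacement_orbit_invariant:
  assumes f_invariant: "\<And>\<alpha> x y. \<alpha> \<in> G \<Longrightarrow> f (\<alpha> x) (\<alpha> y) = f x y"
    and "v \<in> orbit_of u"
  shows "(\<Sum>\<alpha>\<in>G. f v (\<alpha> v)) = (\<Sum>\<alpha>\<in>G. f u (\<alpha> u))"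
proof -
  obtain \<gamma> where \<gamma>: "\<gamma> \<in> G" "v = \<gamma> u" using assms(2) unfolding orbit_of_def by auto
  obtain \<beta> where \<beta>: "\<beta> \<in> G" "\<beta> \<circ> \<gamma> = id" "\<gamma> \<circ> \<beta> = id"
    using inverse_exists[OF \<gamma>(1)] by blast
  have \<beta>\<gamma>: "\<beta> (\<gamma> x) = x" and \<gamma>\<beta>: "\<gamma> (\<beta> x) = x" for x
    using \<beta>(2,3) by (simp_all add: pointfree_idE)
  have "(\<Sum>\<alpha>\<in>G. f v (\<alpha> v)) = (\<Sum>\<alpha>\<in>G. f u ((\<beta> \<circ> \<alpha> \<circ> \<gamma>) u))"
  proof (rule sum.cong)
    fix \<alpha> assume "\<alpha> \<in> G"
    have "f v (\<alpha> v) = f (\<beta> (\<gamma> u)) (\<beta> (\<alpha> (\<gamma> u)))"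
      using f_invariant[OF \<beta>(1)] \<gamma>(2) by simp
    then show "f v (\<alpha> v) = f u ((\<beta> \<circ> \<alpha> \<circ> \<gamma>) u)"
      using \<beta>\<gamma> by simp
  qed simp
  also have "\<dots> = (\<Sum>\<alpha>\<in>G. f u (\<alpha> u))"
  proof (rule sum.reindex_bij_witness[where i="\<lambda>\<alpha>. \<gamma> \<circ> \<alpha> \<circ> \<beta>" and j="\<lambda>\<alpha>. \<beta> \<circ> \<alpha> \<circ> \<gamma>"])
    show "\<gamma> \<circ> \<alpha> \<circ> \<beta> \<in> G" "\<beta> \<circ> \<alpha> \<circ> \<gamma> \<in> G" if "\<alpha> \<in> G" for \<alpha>
      using that \<beta>(1) \<gamma>(1) by (simp_all add: comp_mem)
    show "\<gamma> \<circ> (\<beta> \<circ> \<alpha> \<circ> \<gamma>) \<circ> \<beta> = \<alpha>" "\<beta> \<circ> (\<gamma> \<circ> \<alpha> \<circ> \<beta>) \<circ> \<gamma> = \<alpha>" for \<alpha>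
      by (simp_all add: fun_eq_iff \<beta>\<gamma> \<gamma>\<beta>)
  qed simp
  finally show ?thesis .
qed

theorem card_dvd_sum_displacement:
  fixes f :: "'a \<Rightarrow> 'a \<Rightarrow> nat"
  assumes "finite V" and f_invariant: "\<And>\<alpha> x y. \<alpha> \<in> G \<Longrightarrow> f (\<alpha> x) (\<alpha> y) = f x y"
  shows "card G dvd (\<Sum>u\<in>V. \<Sum>\<alpha>\<in>G. f u (\<alpha> u))"
proof (rule card_dvd_sum_of_orbit_invariant[OF assms(1)])
  fix u
  have "card (orbit_of u) * (\<Sum>\<alpha>\<in>G. f u (\<alpha> u)) = card G * (\<Sum>v\<in>orbit_of u. f u v)"
    using sum_group_eq_sum_orbit[of "f u" u] card_group_eq[of u] by simp
  then show "card G dvd card (orbit_of u) * (\<Sum>\<alpha>\<in>G. f u (\<alpha> u))" by simp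
next
  show "\<And>u v. v \<in> orbit_of u \<Longrightarrow> (\<Sum>\<alpha>\<in>G. f v (\<alpha> v)) = (\<Sum>\<alpha>\<in>G. f u (\<alpha> u))"
    using sum_displacement_orbit_invariant f_invariant by blast
qed

end

lemma Aut_maps_into: "\<alpha> \<in> Aut V E \<Longrightarrow> x \<in> V \<Longrightarrow> \<alpha> x \<in> V"
  unfolding Aut_def bij_betw_def by auto

lemma Aut_inverse_exists:
  assumes "\<alpha> \<in> Aut V E"
  shows "\<exists>\<beta>\<in>Aut V E. \<beta> \<circ> \<alpha> = id \<and> \<alpha> \<circ> \<beta> = id"
proof -
  have bij: "bij_betw \<alpha> V V" and fix_out: "\<And>x. x \<notin> V \<Longrightarrow> \<alpha> x = x"
    and adj: "\<And>u v. u \<in> V \<Longrightarrow> v \<in> V \<Longrightarrow> E (\<alpha> u) (\<alpha> v) \<longleftrightarrow> E u v"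
    using assms unfolding Aut_def by auto
  define \<beta> where "\<beta> x = (if x \<in> V then inv_into V \<alpha> x else x)" for x
  have bij_\<beta>: "bij_betw \<beta> V V"
    using bij_betw_inv_into[OF bij] by (rule bij_betw_cong[THEN iffD1, rotated]) (simp add: \<beta>_def)
  have left: "\<beta> (\<alpha> x) = x" and right: "\<alpha> (\<beta> x) = x" for x
    using bij fix_out unfolding \<beta>_def bij_betw_def
    by (cases "x \<in> V"; auto simp: f_inv_into_f)+
  have "E (\<beta> u) (\<beta> v) \<longleftrightarrow> E u v" if "u \<in> V" "v \<in> V" for u v
    using adj[of "\<beta> u" "\<beta> v"] bij_\<beta> that right by (simp add: bij_betw_apply)
  then have "\<beta> \<in> Aut V E" using bij_\<beta> unfolding Aut_def by (simp add: \<beta>_def)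
  moreover have "\<beta> \<circ> \<alpha> = id" "\<alpha> \<circ> \<beta> = id" using left right by auto
  ultimately show ?thesis by blast
qed

lemma finite_Aut:
  assumes "finite V"
  shows "finite (Aut V E)"
proof -
  have "inj_on (\<lambda>\<alpha>. restrict \<alpha> V) (Aut V E)"
  proof (rule inj_onI)
    fix \<alpha> \<beta> assume "\<alpha> \<in> Aut V E" "\<beta> \<in> Aut V E" and eq: "restrict \<alpha> V = restrict \<beta> V"
    show "\<alpha> = \<beta>"
    proof
      fix x
      show "\<alpha> x = \<beta> x"
        using \<open>\<alpha> \<in> Aut V E\<close> \<open>\<beta> \<in> Aut V E\<close> fun_cong[OF eq, of x]
        by (cases "x \<in> V") (auto simp: Aut_def)
    qed
  qed
  moreover have "(\<lambda>\<alpha>. restrict \<alpha> V) ` Aut V E \<subseteq> V \<rightarrow>\<^sub>E V" using Aut_maps_into by fastforce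
  then have "finite ((\<lambda>\<alpha>. restrict \<alpha> V) ` Aut V E)"
    using finite_PiE[OF assms, of "\<lambda>_. V"] assms by (auto intro: finite_subset)
  ultimately show ?thesis using finite_imageD by blast
qed

lemma transformation_group_Aut:
  assumes "finite V"
  shows "transformation_group V (Aut V E)"
proof
  show "finite (Aut V E)" using finite_Aut[OF assms] .
  show "id \<in> Aut V E" unfolding Aut_def by simp
  fix \<alpha> \<beta> assume \<alpha>: "\<alpha> \<in> Aut V E"
  show "\<exists>\<beta>\<in>Aut V E. \<beta> \<circ> \<alpha> = id \<and> \<alpha> \<circ> \<beta> = id" using Aut_inverse_exists[OF \<alpha>] .
  show "x \<in> V \<Longrightarrow> \<alpha> x \<in> V" for x using Aut_maps_into[OF \<alpha>] .
  assume \<beta>: "\<beta> \<in> Aut V E"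
  then show "\<alpha> \<circ> \<beta> \<in> Aut V E"
    using \<alpha> Aut_maps_into[OF \<beta>] unfolding Aut_def by (auto intro: bij_betw_trans)
qed

lemma walk_between_Aut_image:
  assumes "\<alpha> \<in> Aut V E" and "walk_between V E x y xs"
  shows "walk_between V E (\<alpha> x) (\<alpha> y) (map \<alpha> xs)"
proof -
  have "is_walk E ys \<Longrightarrow> set ys \<subseteq> V \<Longrightarrow> is_walk E (map \<alpha> ys)" for ys
    using assms(1) by (induction E ys rule: is_walk.induct) (auto simp: Aut_def)
  moreover have "xs \<noteq> []" using assms(2) unfolding walk_between_def by auto
  ultimately show ?thesis
    using assms Aut_maps_into[OF assms(1)] unfolding walk_between_def by (auto simp: hd_map last_map)
qed

lemma dist_Aut_invariant:
  assumes "\<alpha> \<in> Aut V E"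
  shows "dist V E (\<alpha> x) (\<alpha> y) = dist V E x y"
proof -
  obtain \<beta> where \<beta>: "\<beta> \<in> Aut V E" "\<beta> \<circ> \<alpha> = id" using Aut_inverse_exists[OF assms] by blast
  have "(\<exists>xs. walk_between V E (\<alpha> x) (\<alpha> y) xs \<and> length xs = n) \<longleftrightarrow>
        (\<exists>xs. walk_between V E x y xs \<and> length xs = n)" for n
    using walk_between_Aut_image[OF \<beta>(1), of "\<alpha> x" "\<alpha> y"] walk_between_Aut_image[OF assms, of x y]
      pointfree_idE[OF \<beta>(2)] by (metis length_map)
  then show ?thesis unfolding dist_def by simp
qed

lemma GP_in_Ints_if_even_card:
  assumes "finite V" and "even (card V)"
  shows "GP V E \<in> \<int>"
proof -
  interpret transformation_group V "Aut V E" using transformation_group_Aut[OF assms(1)] .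
  obtain m where m: "card V = 2 * m" using assms(2) by blast
  have "card (Aut V E) dvd (\<Sum>u\<in>V. \<Sum>\<alpha>\<in>Aut V E. dist V E u (\<alpha> u))"
    using card_dvd_sum_displacement[OF assms(1)] dist_Aut_invariant .
  then obtain k where k: "(\<Sum>u\<in>V. \<Sum>\<alpha>\<in>Aut V E. dist V E u (\<alpha> u)) = card (Aut V E) * k" ..
  have "card (Aut V E) > 0" using finite_G id_mem card_gt_0_iff by blast
  have "(\<Sum>u\<in>V. \<Sum>\<alpha>\<in>Aut V E. real (dist V E u (\<alpha> u))) = real (card (Aut V E)) * real k"
    using arg_cong[OF k, of real] by simp
  then have "GP V E = real m * real k"
    using \<open>card (Aut V E) > 0\<close> unfolding GP_def m by simp
  then show ?thesis by simp
qed

theorem proposition3p5: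
  fixes V :: "'a set" and E :: "'a \<Rightarrow> 'a \<Rightarrow> bool"
  assumes "fullerene V E"
  shows "GP V E \<in> \<int>"
proof -
  have "simple_graph V E" and "cubic V E" using assms unfolding fullerene_def by auto
  then have "finite V" and "even (card V)"
    using even_card_cubic unfolding simple_graph_def by blast+
  then show ?thesis by (rule GP_in_Ints_if_even_card)
qed

end
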